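(* Let $\mathbf{X}=\{X_n\}_{n\ge 0}$ be a real-valued integrable process adapted to the filtration $\{\mathcal{F}_n\}_{n\ge0}$, and suppose $\mathbf{X}$ satisfies (A1) and (A4). Then: (i) $X_n\,I\{N_T<\infty\}$ possesses a finite limit a.e. as $n\to\infty$; (ii) if in addition (A2) holds, then $X_n\,I\{N_T<\infty\}\to 0$ a.e.; (iii) a.e., $\limsup_n |X_n|\,I\{N_T=\infty\}\le \limsup_n |U_n|$; (iv) if in addition (A3) holds, then $\lim_n X_n\,I\{N_T=\infty\}=0$ a.e.
   Context: Let $(\Omega,\mathcal{F},P)$ be a probability space with filtration $\mathcal{F}_0\subset\mathcal{F}_1\subset\cdots\subset\mathcal{F}$, and let $\mathbf{X}=\{X_n:n\ge0\}$ be an adapted process with $E|X_n|<\infty$ for all $n$. Residuals: $\epsilon_n=X_n-E[X_n\mid\mathcal{F}_{n-1}]$, $n\ge1$; partial sums $M_{s,t}=\sum_{i=s}^t\epsilon_i$ for $t\ge s\ge1$. $U_n=E[X_n\mid\mathcal{F}_{n-1}]\,I\{X_{n-1}=0\}$, $n\ge1$. Events: $D^+_n=\{X_n>0\}$, $D^-_n=\{X_n<0\}$, $D^0_n=\{X_n=0\}$ for $n\ge0$, and for $n\ge1$, $D_n=D^+_n(D^+_{n-1})^c\cup D^-_n(D^-_{n-1})^c\cup D^0_n(D^0_{n-1})^c$ (a "crossing" at time $n$). For $j\ge1$ define $T_j=\inf\{t\ge1:\sum_{i=1}^t I\{D_i\}\ge j\}$ (with $\inf\emptyset=\infty$), and $N_T=\sup\{j\ge1:T_j<\infty\}$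 (with $N_T=0$ if $T_1=\infty$). Assumptions: (A1) There are constants $\alpha_n\ge0$ with $\sum_n\alpha_n<\infty$ such that a.e., for all $n\ge1$: $0\le \frac{E[X_n\mid\mathcal{F}_{n-1}]}{X_{n-1}}I\{X_{n-1}\ne0\}\le 1+\alpha_n$. (A2) There are constants $0\le k_n\le1$ with $\sum_n(1-k_n)=\infty$ such that a.e., for all $n\ge1$: $0\le \frac{E[X_n\mid\mathcal{F}_{n-1}]}{X_{n-1}}I\{X_{n-1}\ne0\}\le k_n$. (A3) $\lim_n U_n=0$ a.e. (A4) $M_{1,n}$ possesses a finite limit a.e. as $n\to\infty$. *)

theory Defs
  imports "HOL-Probability.Probability"
begin

text \<open>Conditional expectation E[X_n | F_{n-1}] (meaningful for n \<ge> 1).\<close>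
definition cexp :: "'a measure \<Rightarrow> (nat \<Rightarrow> 'a measure) \<Rightarrow> (nat \<Rightarrow> 'a \<Rightarrow> real) \<Rightarrow> nat \<Rightarrow> 'a \<Rightarrow> real" where
  "cexp M F X n = real_cond_exp M (F (n - 1)) (X n)"

definition resid :: "'a measure \<Rightarrow> (nat \<Rightarrow> 'a measure) \<Rightarrow> (nat \<Rightarrow> 'a \<Rightarrow> real) \<Rightarrow> nat \<Rightarrow> 'a \<Rightarrow> real" where
  "resid M F X n x = X n x - cexp M F X n x"

definition Msum :: "'a measure \<Rightarrow> (nat \<Rightarrow> 'a measure) \<Rightarrow> (nat \<Rightarrow> 'a \<Rightarrow> real) \<Rightarrow> nat \<Rightarrow> nat \<Rightarrow> 'a \<Rightarrow> real" where
  "Msum M F X s t x = (\<Sum>i=s..t. resid M F X i x)"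

definition Uproc :: "'a measure \<Rightarrow> (nat \<Rightarrow> 'a measure) \<Rightarrow> (nat \<Rightarrow> 'a \<Rightarrow> real) \<Rightarrow> nat \<Rightarrow> 'a \<Rightarrow> real" where
  "Uproc M F X n x = cexp M F X n x * (if X (n - 1) x = 0 then 1 else 0)"

definition crossing :: "(nat \<Rightarrow> 'a \<Rightarrow> real) \<Rightarrow> nat \<Rightarrow> 'a \<Rightarrow> bool" where
  "crossing X n x =
     ((X n x > 0 \<and> \<not> X (n - 1) x > 0) \<or>
      (X n x < 0 \<and> \<not> X (n - 1) x < 0) \<or>
      (X n x = 0 \<and> \<not> X (n - 1) x = 0))"

text \<open>T_j = inf {t \<ge> 1. sum_{i=1}^t I{D_i} \<ge> j}, with inf of the empty set = \<infinity>.\<close>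
definition Tcross :: "(nat \<Rightarrow> 'a \<Rightarrow> real) \<Rightarrow> nat \<Rightarrow> 'a \<Rightarrow> enat" where
  "Tcross X j x = Inf {enat t | t. t \<ge> 1 \<and> card {i \<in> {1..t}. crossing X i x} \<ge> j}"

text \<open>N_T = sup {j \<ge> 1. T_j < \<infinity>}, with N_T = 0 if T_1 = \<infinity>.\<close>
definition NT :: "(nat \<Rightarrow> 'a \<Rightarrow> real) \<Rightarrow> 'a \<Rightarrow> enat" where
  "NT X x = Sup {enat j | j. j \<ge> 1 \<and> Tcross X j x < \<infinity>}"

end

theory Submission
  imports Defs
begin

(* Everything happens along one sample path. By (A1), while X stays positive,
   X n \<le> (1 + \<alpha> n) X (n - 1) + \<epsilon> n, and symmetrically while it stays negative, where the
   partial sums of \<epsilon> converge by (A4). Subtracting those partial sums turns X on such a run into a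
   nonnegative sequence with summable multiplicative growth, which converges (and tends to 0 under the
   contraction (A2)); with finitely many crossings this applies to the final run. With infinitely
   many crossings, look at the last crossing s before n: a sign change forces |X s| \<le> |\<epsilon> s|, and a
   departure from 0 forces |X s| \<le> |U s| + |\<epsilon> s|; from s to n, X grows at most by the factor
   exp (\<Sum> k\<in>{s<..n}. \<alpha> k) plus the oscillation of the residual sums, both negligible for large s. *)

lemma growth_bound:
  fixes V a :: "nat \<Rightarrow> real"
  assumes a_nonneg: "\<And>i. a i \<ge> 0" and "s \<le> n"
    and rec: "\<And>i. s < i \<Longrightarrow> i \<le> n \<Longrightarrow> V i \<le> (1 + a i) * V (i - 1)"
    and nonneg: "\<And>i. s \<le> i \<Longrightarrow> i \<le> n \<Longrightarrow> V i \<ge> 0"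
  shows "V n \<le> V s * exp (\<Sum>k\<in>{s<..n}. a k)"
  using \<open>s \<le> n\<close>
proof (induction rule: dec_induct)
  case base
  then show ?case by simp
next
  case (step m)
  have "V (Suc m) \<le> (1 + a (Suc m)) * V m"
    using rec[of "Suc m"] step.hyps by simp
  also have "\<dots> \<le> exp (a (Suc m)) * V m"
    using nonneg[of m] step.hyps by (intro mult_right_mono exp_ge_add_one_self) auto
  also have "\<dots> \<le> exp (a (Suc m)) * (V s * exp (\<Sum>k\<in>{s<..m}. a k))"
    using step.IH by simp
  also have "\<dots> = V s * exp (\<Sum>k\<in>{s<..Suc m}. a k)"
  proof -
    have "{s<..Suc m} = insert (Suc m) {s<..m}"
      using step.hyps by auto
    then show ?thesis by (simp add: exp_add)
  qed
  finally show ?case .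
qed

lemma recursion_shift_step:
  fixes y y' S S' K a :: real
  assumes "y \<le> (1 + a) * y' + (S - S')" "S' \<le> K" "a \<ge> 0"
  shows "y - S + K \<le> (1 + a) * (y' - S' + K)"
proof -
  have "a * (K - S') \<ge> 0"
    using assms by simp
  with assms(1) show ?thesis by (simp add: algebra_simps)
qed

lemma almost_decreasing_convergent:
  fixes V a :: "nat \<Rightarrow> real"
  assumes a_nonneg: "\<And>i. a i \<ge> 0" and summable_a: "summable a"
    and rec: "\<And>i. s < i \<Longrightarrow> V i \<le> (1 + a i) * V (i - 1)"
    and nonneg: "\<And>i. s \<le> i \<Longrightarrow> V i \<ge> 0"
  shows "convergent V"
proof -
  define A where "A n = (\<Sum>i\<le>n. a i)" for n
  have A_bounds: "0 \<le> A n" "A n \<le> suminf a" for n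
    unfolding A_def by (auto intro: sum_nonneg sum_le_suminf[OF summable_a] simp: a_nonneg)
  define B where "B = V s * exp (suminf a)"
  have V_le_B: "V n \<le> B" if "s \<le> n" for n
  proof -
    have "V n \<le> V s * exp (\<Sum>k\<in>{s<..n}. a k)"
      using growth_bound[of a s n V] a_nonneg rec nonneg that by auto
    also have "\<dots> \<le> B"
      unfolding B_def using nonneg[of s]
      by (intro mult_left_mono exp_mono sum_le_suminf[OF summable_a]) (auto simp: a_nonneg)
    finally show ?thesis .
  qed
  have "B \<ge> 0"
    using V_le_B[of s] nonneg[of s] by simp
  (* Subtracting the largest possible accumulated growth makes the sequence decreasing. *)
  define W where "W n = V (n + s) - B * A (n + s)" for n
  have "decseq W"
  proof (rule decseq_SucI)
    fix n
    have "V (Suc n + s) - V (n + s) \<le> a (Suc n + s) * V (n + s)"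
      using rec[of "Suc n + s"] by (simp add: algebra_simps)
    also have "\<dots> \<le> a (Suc n + s) * B"
      using V_le_B by (intro mult_left_mono) (auto simp: a_nonneg)
    finally show "W (Suc n) \<le> W n"
      unfolding W_def A_def by (simp add: algebra_simps)
  qed
  moreover have "Bseq W"
  proof (rule BseqI')
    fix n
    have "0 \<le> V (n + s)" "V (n + s) \<le> B"
      using nonneg V_le_B by auto
    moreover have "0 \<le> B * A (n + s)" "B * A (n + s) \<le> B * suminf a"
      using A_bounds \<open>B \<ge> 0\<close> by (auto intro: mult_left_mono)
    ultimately show "norm (W n) \<le> B + B * suminf a"
      unfolding W_def by simp
  qed
  ultimately have "convergent W"
    by (intro Bseq_monoseq_convergent decseq_imp_monoseq)
  moreover have "convergent (\<lambda>n. B * A (n + s))"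
    using tendsto_mult_left[OF summable_LIMSEQ'[OF summable_a], of B]
    unfolding A_def convergent_ignore_initial_segment[where f = "\<lambda>n. B * (\<Sum>i\<le>n. a i)"]
    by (auto simp: convergent_def)
  ultimately have "convergent (\<lambda>n. V (n + s))"
    using convergent_add unfolding W_def by fastforce
  then show ?thesis
    by (simp only: convergent_ignore_initial_segment)
qed

lemma perturbed_recursion_convergent:
  fixes y S a :: "nat \<Rightarrow> real"
  assumes a_nonneg: "\<And>i. a i \<ge> 0" and "summable a" and "convergent S"
    and rec: "\<And>i. s < i \<Longrightarrow> y i \<le> (1 + a i) * y (i - 1) + (S i - S (i - 1))"
    and nonneg: "\<And>i. s \<le> i \<Longrightarrow> y i \<ge> 0"
  shows "convergent y"
proof -
  obtain C where C: "\<And>n. \<bar>S n\<bar> \<le> C"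
    using convergent_imp_Bseq[OF \<open>convergent S\<close>] unfolding Bseq_def by auto
  have "convergent (\<lambda>i. y i - S i + C)"
  proof (rule almost_decreasing_convergent[OF a_nonneg \<open>summable a\<close>])
    fix i
    assume "s < i"
    show "y i - S i + C \<le> (1 + a i) * (y (i - 1) - S (i - 1) + C)"
      using C[of "i - 1"] a_nonneg by (intro recursion_shift_step[OF rec[OF \<open>s < i\<close>]]) auto
  next
    fix i
    assume "s \<le> i"
    then show "y i - S i + C \<ge> 0"
      using nonneg[of i] C[of i] by auto
  qed
  from convergent_add[OF this convergent_diff[OF \<open>convergent S\<close> convergent_const[of C]]]
  show ?thesis by simp
qed

lemma perturbed_recursion_bound:
  fixes y S a :: "nat \<Rightarrow> real"
  assumes a_nonneg: "\<And>i. a i \<ge> 0" and "s \<le> n"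
    and rec: "\<And>i. s < i \<Longrightarrow> i \<le> n \<Longrightarrow> y i \<le> (1 + a i) * y (i - 1) + (S i - S (i - 1))"
    and nonneg: "\<And>i. s \<le> i \<Longrightarrow> i \<le> n \<Longrightarrow> y i \<ge> 0"
    and oscillation: "\<And>i. s \<le> i \<Longrightarrow> i \<le> n \<Longrightarrow> \<bar>S i - S s\<bar> \<le> d"
  shows "y n \<le> (y s + d) * exp (\<Sum>k\<in>{s<..n}. a k)"
proof -
  define V where "V i = y i - S i + (S s + d)" for i
  have "V n \<le> V s * exp (\<Sum>k\<in>{s<..n}. a k)"
  proof (rule growth_bound[OF a_nonneg \<open>s \<le> n\<close>])
    fix i
    assume "s < i" "i \<le> n"
    then have "\<bar>S (i - 1) - S s\<bar> \<le> d"
      by (intro oscillation) auto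
    then show "V i \<le> (1 + a i) * V (i - 1)"
      unfolding V_def using a_nonneg
      by (intro recursion_shift_step[OF rec[OF \<open>s < i\<close> \<open>i \<le> n\<close>]]) auto
  next
    fix i
    assume "s \<le> i" "i \<le> n"
    then show "V i \<ge> 0"
      unfolding V_def using nonneg[of i] oscillation[of i] by auto
  qed
  moreover have "y n \<le> V n"
    unfolding V_def using oscillation[of n] \<open>s \<le> n\<close> by auto
  ultimately show ?thesis
    by (simp add: V_def)
qed

lemma contracting_recursion_tendsto_zero:
  fixes y S k :: "nat \<Rightarrow> real"
  assumes "convergent y" "convergent S"
    and rec: "\<And>i. s < i \<Longrightarrow> y i \<le> k i * y (i - 1) + (S i - S (i - 1))"
    and nonneg: "\<And>i. s \<le> i \<Longrightarrow> y i \<ge> 0"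
    and k: "\<And>i. 0 \<le> k i \<and> k i \<le> 1" and not_summable: "\<not> summable (\<lambda>i. 1 - k i)"
  shows "y \<longlonglongrightarrow> 0"
proof -
  obtain L where L: "y \<longlonglongrightarrow> L"
    using \<open>convergent y\<close> by (auto simp: convergent_def)
  have "L \<ge> 0"
    by (rule LIMSEQ_le_const[OF L]) (use nonneg in auto)
  obtain C where C: "\<And>n. \<bar>S n\<bar> \<le> C"
    using convergent_imp_Bseq[OF \<open>convergent S\<close>] unfolding Bseq_def by auto
  have "\<not> L > 0"
  proof
    assume "L > 0"
    then obtain N0 where N0: "\<And>n. n \<ge> N0 \<Longrightarrow> y n > L / 2"
      using order_tendstoD(1)[OF L, of "L / 2"] by (auto simp: eventually_sequentially)
    define N where "N = max N0 s"
    define f where "f j = 1 - k (j + Suc N)" for j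
    (* While y stays above L / 2, each contraction step loses at least (1 - k i) L / 2. *)
    have telescope: "y (N + m) - S (N + m) \<le> y N - S N - L / 2 * (\<Sum>j<m. f j)" for m
    proof (induction m)
      case 0
      then show ?case by simp
    next
      case (Suc m)
      let ?i = "N + Suc m"
      have "L / 2 < y (N + m)"
        using N0 by (simp add: N_def)
      then have "(1 - k ?i) * (L / 2) \<le> (1 - k ?i) * y (N + m)"
        using k[of ?i] by (intro mult_left_mono) auto
      moreover have "y ?i \<le> k ?i * y (N + m) + (S ?i - S (N + m))"
        using rec[of ?i] by (simp add: N_def)
      moreover have "L / 2 * f m = (1 - k ?i) * (L / 2)"
        by (simp add: f_def add.commute)
      ultimately have "L / 2 * f m \<le> y (N + m) - y ?i + (S ?i - S (N + m))"
        by (simp add: algebra_simps)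
      then show ?case
        using Suc.IH by (simp add: algebra_simps)
    qed
    have "summable f"
    proof (rule summableI_nonneg_bounded)
      fix n
      show "0 \<le> f n"
        using k by (simp add: f_def)
    next
      fix m
      have "0 \<le> y (N + m)"
        by (rule nonneg) (simp add: N_def)
      then have "L / 2 * (\<Sum>j<m. f j) \<le> y N - S N + C"
        using telescope[of m] C[of "N + m"] by auto
      then show "(\<Sum>j<m. f j) \<le> (y N - S N + C) / (L / 2)"
        using \<open>L > 0\<close> by (simp add: field_simps)
    qed
    then have "summable (\<lambda>i. 1 - k i)"
      unfolding f_def by (rule summable_iff_shift[THEN iffD1])
    with not_summable show False ..
  qed
  with \<open>L \<ge> 0\<close> L show ?thesis
    by simp
qed

lemma small_margin_exists:
  fixes r r' :: real
  assumes "r < r'"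
  obtains d where "d > 0" "(r + 2 * d) * exp d < r'"
proof -
  have "((\<lambda>d. (r + 2 * d) * exp d) \<longlongrightarrow> (r + 2 * 0) * exp 0) (at_right 0)"
    by (intro tendsto_intros)
  then have "\<forall>\<^sub>F d in at_right 0. (r + 2 * d) * exp d < r'"
    using assms by (intro order_tendstoD(2)) auto
  then obtain b where "b > 0" and b: "\<And>d. 0 < d \<Longrightarrow> d < b \<Longrightarrow> (r + 2 * d) * exp d < r'"
    unfolding eventually_at_right_field by auto
  show ?thesis
    by (rule that[of "b / 2"]) (use b[of "b / 2"] \<open>b > 0\<close> in auto)
qed

lemma crossing_uminus: "crossing (\<lambda>n x. - X n x) = crossing X"
  by (auto simp: crossing_def fun_eq_iff)

lemma sign_stable_without_crossing:
  assumes no_crossing: "\<And>i. s < i \<Longrightarrow> i \<le> n \<Longrightarrow> \<not> crossing X i x"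
    and "s \<le> i" "i \<le> n"
  shows "(X i x > 0 \<longleftrightarrow> X s x > 0) \<and> (X i x < 0 \<longleftrightarrow> X s x < 0)"
  using \<open>s \<le> i\<close> \<open>i \<le> n\<close>
proof (induction rule: dec_induct)
  case base
  then show ?case by simp
next
  case (step m)
  then have "\<not> crossing X (Suc m) x"
    by (intro no_crossing) auto
  with step show ?case
    unfolding crossing_def by auto
qed

lemma last_crossing:
  assumes "crossing X s0 x" "s0 \<le> n"
  obtains s where "s0 \<le> s" "s \<le> n" "crossing X s x"
    "\<And>i. s < i \<Longrightarrow> i \<le> n \<Longrightarrow> \<not> crossing X i x"
proof
  let ?C = "{i \<in> {s0..n}. crossing X i x}"
  have "finite ?C" "s0 \<in> ?C"
    using assms by auto
  then have "Max ?C \<in> ?C"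
    using Max_in by blast
  then show "s0 \<le> Max ?C" "Max ?C \<le> n" "crossing X (Max ?C) x"
    by auto
  show "\<not> crossing X i x" if "Max ?C < i" "i \<le> n" for i
  proof
    assume "crossing X i x"
    with that \<open>s0 \<le> Max ?C\<close> have "i \<in> ?C"
      by auto
    with Max_ge[OF \<open>finite ?C\<close> this] that(1) show False
      by simp
  qed
qed

lemma card_crossings_le_NT:
  assumes "finite B" "B \<subseteq> {i. 1 \<le> i \<and> crossing X i x}" "B \<noteq> {}"
  shows "enat (card B) \<le> NT X x"
proof -
  define t where "t = Max B"
  have "t \<in> B"
    using assms by (simp add: t_def)
  then have "t \<ge> 1"
    using assms(2) by auto
  have "B \<subseteq> {i \<in> {1..t}. crossing X i x}"
    using assms Max_ge[of B] by (auto simp: t_def)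
  then have "card B \<le> card {i \<in> {1..t}. crossing X i x}"
    by (intro card_mono) auto
  with \<open>t \<ge> 1\<close> have "Tcross X (card B) x \<le> enat t"
    unfolding Tcross_def by (intro Inf_lower) blast
  then have "Tcross X (card B) x < \<infinity>"
    by (rule le_less_trans) simp
  moreover have "card B \<ge> 1"
    using assms by (simp add: Suc_le_eq card_gt_0_iff)
  ultimately show ?thesis
    unfolding NT_def by (intro Sup_upper) blast
qed

lemma NT_le_card_crossings:
  assumes "finite {i. 1 \<le> i \<and> crossing X i x}"
  shows "NT X x \<le> enat (card {i. 1 \<le> i \<and> crossing X i x})"
  unfolding NT_def
proof (rule Sup_least)
  fix e
  assume "e \<in> {enat j |j. 1 \<le> j \<and> Tcross X j x < \<infinity>}"
  then obtain j where j: "e = enat j" "Tcross X j x < \<infinity>"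
    by blast
  then obtain t where "j \<le> card {i \<in> {1..t}. crossing X i x}"
    unfolding Tcross_def by (auto simp: Inf_enat_def split: if_splits)
  also have "\<dots> \<le> card {i. 1 \<le> i \<and> crossing X i x}"
    using assms by (intro card_mono) auto
  finally show "e \<le> enat (card {i. 1 \<le> i \<and> crossing X i x})"
    using j by simp
qed

lemma NT_eq_infinity_iff: "NT X x = \<infinity> \<longleftrightarrow> infinite {i. 1 \<le> i \<and> crossing X i x}"
proof
  assume "NT X x = \<infinity>"
  then show "infinite {i. 1 \<le> i \<and> crossing X i x}"
    using NT_le_card_crossings[of X x] by auto
next
  assume inf: "infinite {i. 1 \<le> i \<and> crossing X i x}"
  have "NT X x \<noteq> enat m" for m
  proof -
    obtain B where "finite B" "card B = Suc m" "B \<subseteq> {i. 1 \<le> i \<and> crossing X i x}"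
      using infinite_arbitrarily_large[OF inf] by blast
    then have "enat (Suc m) \<le> NT X x"
      using card_crossings_le_NT[of B X x] by fastforce
    then show ?thesis by auto
  qed
  then show "NT X x = \<infinity>"
    by (cases "NT X x") auto
qed

lemma eventually_constant_sign:
  assumes "finite {i. 1 \<le> i \<and> crossing X i x}"
  obtains s where "\<And>i. s \<le> i \<Longrightarrow> X i x > 0"
    | s where "\<And>i. s \<le> i \<Longrightarrow> X i x < 0"
    | s where "\<And>i. s \<le> i \<Longrightarrow> X i x = 0"
proof -
  note cases = that
  obtain s where bound: "\<And>i. 1 \<le> i \<Longrightarrow> crossing X i x \<Longrightarrow> i \<le> s"
    using assms by (auto simp: finite_nat_set_iff_bounded_le)
  have "\<not> crossing X i x" if "s < i" for i
    using that bound[of i] by auto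
  then have sign: "(X i x > 0 \<longleftrightarrow> X s x > 0) \<and> (X i x < 0 \<longleftrightarrow> X s x < 0)" if "s \<le> i" for i
    using sign_stable_without_crossing[of s i X x i] that by blast
  consider "X s x > 0" | "X s x < 0" | "X s x = 0"
    by linarith
  then show ?thesis
  proof cases
    case 1
    then show ?thesis
      using sign cases(1) by blast
  next
    case 2
    then show ?thesis
      using sign cases(2) by blast
  next
    case 3
    have "X i x = 0" if "s \<le> i" for i
      using sign[OF that] 3 by (cases "X i x" "0::real" rule: linorder_cases) auto
    then show ?thesis
      by (rule cases(3))
  qed
qed

lemma limsup_le_if_eventually_less:
  fixes u v :: "nat \<Rightarrow> real"
  assumes "\<And>r r'. r < r' \<Longrightarrow> eventually (\<lambda>n. u n < r) sequentially
                     \<Longrightarrow> eventually (\<lambda>n. v n < r') sequentially"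
  shows "limsup (\<lambda>n. ereal (v n)) \<le> limsup (\<lambda>n. ereal (u n))"
proof (rule dense_ge)
  fix z
  assume "limsup (\<lambda>n. ereal (u n)) < z"
  then obtain r where r: "limsup (\<lambda>n. ereal (u n)) < ereal r" "ereal r < z"
    using ereal_dense2 by blast
  then obtain r' where r': "ereal r < ereal r'" "ereal r' < z"
    using ereal_dense2 by blast
  have "eventually (\<lambda>n. u n < r) sequentially"
    using Limsup_lessD[OF r(1)] by simp
  then have "eventually (\<lambda>n. v n < r') sequentially"
    using assms[of r r'] r'(1) by simp
  then have "eventually (\<lambda>n. ereal (v n) \<le> z) sequentially"
  proof eventually_elim
    case (elim n)
    then have "ereal (v n) < ereal r'"
      by simp
    with r'(2) show ?case
      by (meson less_imp_le less_trans)
  qed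
  then show "limsup (\<lambda>n. ereal (v n)) \<le> z"
    by (rule Limsup_bounded)
qed

lemma tendsto_zero_if_limsup_abs_le:
  fixes f g :: "nat \<Rightarrow> real"
  assumes "limsup (\<lambda>n. ereal \<bar>f n\<bar>) \<le> limsup (\<lambda>n. ereal \<bar>g n\<bar>)" and "g \<longlonglongrightarrow> 0"
  shows "f \<longlonglongrightarrow> 0"
proof -
  have "(\<lambda>n. ereal \<bar>g n\<bar>) \<longlonglongrightarrow> 0"
    using tendsto_rabs_zero[OF \<open>g \<longlonglongrightarrow> 0\<close>] by (simp add: zero_ereal_def lim_ereal)
  then have "limsup (\<lambda>n. ereal \<bar>g n\<bar>) = 0"
    by (rule lim_imp_Limsup[OF trivial_limit_sequentially])
  with assms(1) have "limsup (\<lambda>n. ereal \<bar>f n\<bar>) \<le> 0"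
    by simp
  moreover have "0 \<le> liminf (\<lambda>n. ereal \<bar>f n\<bar>)"
    by (intro Liminf_bounded) simp
  moreover have "liminf (\<lambda>n. ereal \<bar>f n\<bar>) \<le> limsup (\<lambda>n. ereal \<bar>f n\<bar>)"
    by (rule Liminf_le_Limsup) simp
  ultimately have "liminf (\<lambda>n. ereal \<bar>f n\<bar>) = 0" "limsup (\<lambda>n. ereal \<bar>f n\<bar>) = 0"
    by auto
  then have "(\<lambda>n. ereal \<bar>f n\<bar>) \<longlonglongrightarrow> 0"
    by (rule Liminf_eq_Limsup[OF trivial_limit_sequentially])
  then show ?thesis
    by (simp add: zero_ereal_def lim_ereal tendsto_rabs_zero_iff)
qed

lemma ratio_bounds_imp_bounds:
  fixes c y b :: real
  assumes "0 \<le> c / y * (if y \<noteq> 0 then 1 else 0)" "c / y * (if y \<noteq> 0 then 1 else 0) \<le> b"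
  shows "(y > 0 \<longrightarrow> 0 \<le> c \<and> c \<le> b * y) \<and> (y < 0 \<longrightarrow> b * y \<le> c \<and> c \<le> 0)"
proof (cases "y = 0")
  case False
  then have "0 \<le> c / y" "c / y \<le> b"
    using assms by auto
  then show ?thesis
    by (auto simp: zero_le_divide_iff divide_le_eq)
qed simp

(* The hypotheses along the path at x: c n stands for E[X n | F (n - 1)] (x), S n for M_{1,n} (x),
   and (A1) is written without the quotient. *)
locale A1_path =
  fixes X :: "nat \<Rightarrow> 'a \<Rightarrow> real" and x :: 'a and c S a :: "nat \<Rightarrow> real"
  assumes a_nonneg: "\<And>n. a n \<ge> 0" and summable_a: "summable a"
    and convergent_S: "convergent S"
    and S_diff: "\<And>n. n \<ge> 1 \<Longrightarrow> S n - S (n - 1) = X n x - c n"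
    and c_pos: "\<And>n. n \<ge> 1 \<Longrightarrow> X (n - 1) x > 0 \<Longrightarrow> 0 \<le> c n \<and> c n \<le> (1 + a n) * X (n - 1) x"
    and c_neg: "\<And>n. n \<ge> 1 \<Longrightarrow> X (n - 1) x < 0 \<Longrightarrow> (1 + a n) * X (n - 1) x \<le> c n \<and> c n \<le> 0"
begin

(* Reflecting X preserves the hypotheses and the crossings, so negative runs reduce to positive ones. *)
lemma A1_path_uminus: "A1_path (\<lambda>n x. - X n x) x (\<lambda>n. - c n) (\<lambda>n. - S n) a"
proof
  show "convergent (\<lambda>n. - S n)"
    using convergent_S convergent_minus_iff by blast
next
  fix n :: nat
  assume "n \<ge> 1"
  show "- S n - - S (n - 1) = - X n x - - c n"
    using S_diff[OF \<open>n \<ge> 1\<close>] by simp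
  show "0 \<le> - c n \<and> - c n \<le> (1 + a n) * - X (n - 1) x" if "- X (n - 1) x > 0"
    using c_neg[OF \<open>n \<ge> 1\<close>] that by simp
  show "(1 + a n) * - X (n - 1) x \<le> - c n \<and> - c n \<le> 0" if "- X (n - 1) x < 0"
    using c_pos[OF \<open>n \<ge> 1\<close>] that by simp
qed (use a_nonneg summable_a in auto)

lemma step_after_positive:
  assumes "n \<ge> 1" "X (n - 1) x > 0"
  shows "X n x \<le> (1 + a n) * X (n - 1) x + (S n - S (n - 1))"
  using c_pos[OF assms] S_diff[OF assms(1)] by simp

lemma convergent_if_eventually_positive:
  assumes "\<And>i. s \<le> i \<Longrightarrow> X i x > 0"
  shows "convergent (\<lambda>n. X n x)"
proof (rule perturbed_recursion_convergent[OF a_nonneg summable_a convergent_S])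
  fix i
  assume "s < i"
  then show "X i x \<le> (1 + a i) * X (i - 1) x + (S i - S (i - 1))"
    using assms[of "i - 1"] by (intro step_after_positive) auto
qed (use assms less_imp_le in auto)

lemma convergent_if_finite_crossings:
  assumes "finite {i. 1 \<le> i \<and> crossing X i x}"
  shows "convergent (\<lambda>n. X n x)"
  using assms
proof (cases rule: eventually_constant_sign)
  case (1 s)
  then show ?thesis
    by (rule convergent_if_eventually_positive)
next
  case (2 s)
  then have "convergent (\<lambda>n. - X n x)"
    by (intro A1_path.convergent_if_eventually_positive[OF A1_path_uminus]) auto
  then show ?thesis
    using convergent_minus_iff by blast
next
  case (3 s)
  then have "(\<lambda>n. X n x) \<longlonglongrightarrow> 0"
    by (intro tendsto_eventually) (auto simp: eventually_sequentially)
  then show ?thesis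
    by (auto simp: convergent_def)
qed

lemma tendsto_zero_if_eventually_positive:
  assumes pos: "\<And>i. s \<le> i \<Longrightarrow> X i x > 0"
    and k: "\<And>n. 0 \<le> k n \<and> k n \<le> 1" "\<not> summable (\<lambda>n. 1 - k n)"
    and c_le: "\<And>n. n \<ge> 1 \<Longrightarrow> X (n - 1) x > 0 \<Longrightarrow> c n \<le> k n * X (n - 1) x"
  shows "(\<lambda>n. X n x) \<longlonglongrightarrow> 0"
proof (rule contracting_recursion_tendsto_zero[OF _ convergent_S _ _ k])
  show "convergent (\<lambda>n. X n x)"
    using pos by (rule convergent_if_eventually_positive)
  fix i
  assume "s < i"
  then show "X i x \<le> k i * X (i - 1) x + (S i - S (i - 1))"
    using c_le[of i] S_diff[of i] pos[of "i - 1"] by auto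
qed (use pos less_imp_le in auto)

lemma tendsto_zero_if_finite_crossings:
  assumes "finite {i. 1 \<le> i \<and> crossing X i x}"
    and k: "\<And>n. 0 \<le> k n \<and> k n \<le> 1" "\<not> summable (\<lambda>n. 1 - k n)"
    and c_le: "\<And>n. n \<ge> 1 \<Longrightarrow> X (n - 1) x > 0 \<Longrightarrow> c n \<le> k n * X (n - 1) x"
    and c_ge: "\<And>n. n \<ge> 1 \<Longrightarrow> X (n - 1) x < 0 \<Longrightarrow> k n * X (n - 1) x \<le> c n"
  shows "(\<lambda>n. X n x) \<longlonglongrightarrow> 0"
  using assms(1)
proof (cases rule: eventually_constant_sign)
  case (1 s)
  then show ?thesis
    using k c_le by (rule tendsto_zero_if_eventually_positive)
next
  case (2 s)
  have "(\<lambda>n. - X n x) \<longlonglongrightarrow> 0"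
  proof (rule A1_path.tendsto_zero_if_eventually_positive[OF A1_path_uminus _ k])
    fix n :: nat
    assume "n \<ge> 1" "- X (n - 1) x > 0"
    then show "- c n \<le> k n * - X (n - 1) x"
      using c_ge[of n] by simp
  qed (use 2 in auto)
  from tendsto_minus[OF this] show ?thesis
    by simp
next
  case (3 s)
  then show ?thesis
    by (intro tendsto_eventually) (auto simp: eventually_sequentially)
qed

lemma bound_on_positive_run:
  assumes "s \<le> n" "X s x > 0"
    and no_crossing: "\<And>i. s < i \<Longrightarrow> i \<le> n \<Longrightarrow> \<not> crossing X i x"
    and oscillation: "\<And>i. s \<le> i \<Longrightarrow> i \<le> n \<Longrightarrow> \<bar>S i - S s\<bar> \<le> d"
  shows "X n x \<le> (X s x + d) * exp (\<Sum>k\<in>{s<..n}. a k)"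
proof -
  have pos: "X i x > 0" if "s \<le> i" "i \<le> n" for i
    using sign_stable_without_crossing[OF no_crossing that] \<open>X s x > 0\<close> by blast
  show ?thesis
  proof (rule perturbed_recursion_bound[where y = "\<lambda>i. X i x" and S = S, OF a_nonneg \<open>s \<le> n\<close> _ _ oscillation])
    fix i
    assume "s < i" "i \<le> n"
    then show "X i x \<le> (1 + a i) * X (i - 1) x + (S i - S (i - 1))"
      using pos[of "i - 1"] by (intro step_after_positive) auto
  qed (use pos less_imp_le in auto)
qed

lemma abs_bound_on_run:
  assumes "s \<le> n"
    and no_crossing: "\<And>i. s < i \<Longrightarrow> i \<le> n \<Longrightarrow> \<not> crossing X i x"
    and oscillation: "\<And>i. s \<le> i \<Longrightarrow> i \<le> n \<Longrightarrow> \<bar>S i - S s\<bar> \<le> d"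
  shows "\<bar>X n x\<bar> \<le> (\<bar>X s x\<bar> + d) * exp (\<Sum>k\<in>{s<..n}. a k)"
proof -
  have sign: "(X n x > 0 \<longleftrightarrow> X s x > 0) \<and> (X n x < 0 \<longleftrightarrow> X s x < 0)"
    using sign_stable_without_crossing[OF no_crossing \<open>s \<le> n\<close>] by simp
  consider "X s x > 0" | "X s x < 0" | "X s x = 0"
    by linarith
  then show ?thesis
  proof cases
    case 1
    then show ?thesis
      using bound_on_positive_run[OF assms(1) 1 no_crossing oscillation] sign by simp
  next
    case 2
    have "- X n x \<le> (- X s x + d) * exp (\<Sum>k\<in>{s<..n}. a k)"
      using 2 no_crossing oscillation
      by (intro A1_path.bound_on_positive_run[OF A1_path_uminus \<open>s \<le> n\<close>])
        (auto simp: crossing_uminus abs_minus_commute)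
    then show ?thesis
      using 2 sign by simp
  next
    case 3
    then have "X n x = 0"
      using sign by linarith
    moreover have "d \<ge> 0"
      using oscillation[of s] \<open>s \<le> n\<close> by simp
    ultimately show ?thesis
      by simp
  qed
qed

lemma abs_at_crossing:
  assumes "s \<ge> 1" "crossing X s x"
  shows "\<bar>X s x\<bar> \<le> \<bar>c s * (if X (s - 1) x = 0 then 1 else 0)\<bar> + \<bar>S s - S (s - 1)\<bar>"
proof -
  have "\<bar>X s x\<bar> \<le> \<bar>c s * (if X (s - 1) x = 0 then 1 else 0)\<bar> + \<bar>X s x - c s\<bar>"
  proof (cases "X (s - 1) x" "0::real" rule: linorder_cases)
    case less
    then have "X s x \<ge> 0"
      using \<open>crossing X s x\<close> unfolding crossing_def by auto
    then show ?thesis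
      using c_neg[OF \<open>s \<ge> 1\<close> less] less by auto
  next
    case greater
    then have "X s x \<le> 0"
      using \<open>crossing X s x\<close> unfolding crossing_def by auto
    then show ?thesis
      using c_pos[OF \<open>s \<ge> 1\<close> greater] greater by auto
  qed simp
  then show ?thesis
    using S_diff[OF \<open>s \<ge> 1\<close>] by simp
qed


lemma eventually_abs_less_if_infinite_crossings:
  assumes "infinite {i. 1 \<le> i \<and> crossing X i x}" and "r < r'"
    and U_small: "eventually (\<lambda>n. \<bar>c n * (if X (n - 1) x = 0 then 1 else 0)\<bar> < r) sequentially"
  shows "eventually (\<lambda>n. \<bar>X n x\<bar> < r') sequentially"
proof -
  obtain d where "d > 0" and margin: "(r + 2 * d) * exp d < r'"
    using small_margin_exists[OF \<open>r < r'\<close>] by blast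
  obtain N1 where N1: "\<And>n. n \<ge> N1 \<Longrightarrow> \<bar>c n * (if X (n - 1) x = 0 then 1 else 0)\<bar> < r"
    using U_small by (auto simp: eventually_sequentially)
  obtain N2 where N2: "\<And>m n. m \<ge> N2 \<Longrightarrow> n \<ge> N2 \<Longrightarrow> \<bar>S m - S n\<bar> < d"
    using CauchyD[OF convergent_Cauchy[OF convergent_S] \<open>d > 0\<close>] by auto
  obtain N3 where N3: "\<And>m n. m \<ge> N3 \<Longrightarrow> \<bar>sum a {m..<n}\<bar> < d"
    using summable_a \<open>d > 0\<close> unfolding summable_Cauchy by (metis real_norm_def)
  obtain s0 where s0: "s0 \<ge> max N1 (Suc N2)" "s0 \<ge> N3" "1 \<le> s0" "crossing X s0 x"
    using \<open>infinite _\<close> unfolding infinite_nat_iff_unbounded_le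
    by (metis (mono_tags, lifting) max.boundedE mem_Collect_eq)
  have "\<bar>X n x\<bar> < r'" if "s0 \<le> n" for n
  proof -
    (* The last crossing s before n starts a run of constant sign at a value below r + d;
       along the run X grows by at most the factor exp d, up to the oscillation d of S. *)
    obtain s where s: "s0 \<le> s" "s \<le> n" "crossing X s x"
      and no_crossing: "\<And>i. s < i \<Longrightarrow> i \<le> n \<Longrightarrow> \<not> crossing X i x"
      using last_crossing[OF \<open>crossing X s0 x\<close> \<open>s0 \<le> n\<close>] by blast
    have "\<bar>X s x\<bar> < r + d"
      using abs_at_crossing[OF _ s(3)] N1[of s] N2[of s "s - 1"] s0 s(1) by fastforce
    have "(\<Sum>k\<in>{s<..n}. a k) \<le> d"
    proof -
      have "{s<..n} = {Suc s..<Suc n}"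
        by auto
      then show ?thesis
        using N3[of "Suc s" "Suc n"] s0 s(1) by auto
    qed
    have "\<bar>X n x\<bar> \<le> (\<bar>X s x\<bar> + d) * exp (\<Sum>k\<in>{s<..n}. a k)"
    proof (rule abs_bound_on_run[OF \<open>s \<le> n\<close> no_crossing])
      fix i
      assume "s \<le> i"
      then show "\<bar>S i - S s\<bar> \<le> d"
        using N2[of i s] s0 s(1) by fastforce
    qed
    also have "\<dots> \<le> (r + 2 * d) * exp d"
      using \<open>\<bar>X s x\<bar> < r + d\<close> \<open>(\<Sum>k\<in>{s<..n}. a k) \<le> d\<close> \<open>d > 0\<close>
      by (intro mult_mono) auto
    also have "\<dots> < r'"
      by (rule margin)
    finally show ?thesis .
  qed
  then show ?thesis
    by (auto simp: eventually_sequentially)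
qed

lemma convergent_on_NT_finite: "convergent (\<lambda>n. X n x * (if NT X x < \<infinity> then 1 else 0))"
proof (cases "NT X x < \<infinity>")
  case True
  then have "finite {i. 1 \<le> i \<and> crossing X i x}"
    using NT_eq_infinity_iff[of X x] by (metis less_irrefl)
  with True show ?thesis
    using convergent_if_finite_crossings by simp
qed (simp add: convergent_const)

lemma tendsto_zero_on_NT_finite:
  assumes k: "\<And>n. 0 \<le> k n \<and> k n \<le> 1" "\<not> summable (\<lambda>n. 1 - k n)"
    and ratio: "\<forall>n\<ge>1. 0 \<le> c n / X (n - 1) x * (if X (n - 1) x \<noteq> 0 then 1 else 0) \<and>
                  c n / X (n - 1) x * (if X (n - 1) x \<noteq> 0 then 1 else 0) \<le> k n"
  shows "(\<lambda>n. X n x * (if NT X x < \<infinity> then 1 else 0)) \<longlonglongrightarrow> 0"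
proof (cases "NT X x < \<infinity>")
  case True
  have "(\<lambda>n. X n x) \<longlonglongrightarrow> 0"
  proof (rule tendsto_zero_if_finite_crossings[OF _ k])
    show "finite {i. 1 \<le> i \<and> crossing X i x}"
      using True NT_eq_infinity_iff[of X x] by (metis less_irrefl)
  next
    fix n :: nat
    assume "n \<ge> 1"
    then have "(X (n - 1) x > 0 \<longrightarrow> 0 \<le> c n \<and> c n \<le> k n * X (n - 1) x) \<and>
               (X (n - 1) x < 0 \<longrightarrow> k n * X (n - 1) x \<le> c n \<and> c n \<le> 0)"
      using ratio by (intro ratio_bounds_imp_bounds) auto
    then show "X (n - 1) x > 0 \<Longrightarrow> c n \<le> k n * X (n - 1) x"
      and "X (n - 1) x < 0 \<Longrightarrow> k n * X (n - 1) x \<le> c n"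
      by auto
  qed
  with True show ?thesis
    by simp
qed simp

lemma limsup_on_NT_infinite:
  "limsup (\<lambda>n. ereal (\<bar>X n x\<bar> * (if NT X x = \<infinity> then 1 else 0)))
     \<le> limsup (\<lambda>n. ereal \<bar>c n * (if X (n - 1) x = 0 then 1 else 0)\<bar>)"
proof (cases "NT X x = \<infinity>")
  case True
  then have "infinite {i. 1 \<le> i \<and> crossing X i x}"
    by (simp add: NT_eq_infinity_iff)
  have "limsup (\<lambda>n. ereal \<bar>X n x\<bar>) \<le> limsup (\<lambda>n. ereal \<bar>c n * (if X (n - 1) x = 0 then 1 else 0)\<bar>)"
  proof (rule limsup_le_if_eventually_less)
    fix r r' :: real
    assume "r < r'" "eventually (\<lambda>n. \<bar>c n * (if X (n - 1) x = 0 then 1 else 0)\<bar> < r) sequentially"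
    with \<open>infinite _\<close> show "eventually (\<lambda>n. \<bar>X n x\<bar> < r') sequentially"
      by (rule eventually_abs_less_if_infinite_crossings)
  qed
  with True show ?thesis
    by simp
next
  case False
  show ?thesis
    by (intro Limsup_mono always_eventually) (simp add: False)
qed

end

lemma A1_pathI:
  assumes "\<And>n. \<alpha> n \<ge> 0" "summable \<alpha>"
    and ratio: "\<forall>n\<ge>1. 0 \<le> cexp M F X n x / X (n - 1) x * (if X (n - 1) x \<noteq> 0 then 1 else 0) \<and>
                  cexp M F X n x / X (n - 1) x * (if X (n - 1) x \<noteq> 0 then 1 else 0) \<le> 1 + \<alpha> n"
    and "\<exists>L. (\<lambda>n. Msum M F X 1 n x) \<longlonglongrightarrow> L"
  shows "A1_path X x (\<lambda>n. cexp M F X n x) (\<lambda>n. Msum M F X 1 n x) \<alpha>"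
proof
  show "convergent (\<lambda>n. Msum M F X 1 n x)"
    using assms(4) by (simp add: convergent_def)
next
  fix n :: nat
  assume "n \<ge> 1"
  then obtain m where "n = Suc m"
    by (cases n) auto
  then show "Msum M F X 1 n x - Msum M F X 1 (n - 1) x = X n x - cexp M F X n x"
    by (simp add: Msum_def resid_def)
  have "(X (n - 1) x > 0 \<longrightarrow> 0 \<le> cexp M F X n x \<and> cexp M F X n x \<le> (1 + \<alpha> n) * X (n - 1) x) \<and>
        (X (n - 1) x < 0 \<longrightarrow> (1 + \<alpha> n) * X (n - 1) x \<le> cexp M F X n x \<and> cexp M F X n x \<le> 0)"
    using ratio \<open>n \<ge> 1\<close> by (intro ratio_bounds_imp_bounds) auto
  then show "X (n - 1) x > 0 \<Longrightarrow> 0 \<le> cexp M F X n x \<and> cexp M F X n x \<le> (1 + \<alpha> n) * X (n - 1) x"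
    and "X (n - 1) x < 0 \<Longrightarrow> (1 + \<alpha> n) * X (n - 1) x \<le> cexp M F X n x \<and> cexp M F X n x \<le> 0"
    by auto
qed (use assms in auto)

theorem theorem1:
  fixes M :: "'a measure" and F :: "nat \<Rightarrow> 'a measure" and X :: "nat \<Rightarrow> 'a \<Rightarrow> real"
    and \<alpha> :: "nat \<Rightarrow> real"
  assumes prob: "prob_space M"
    and subalg: "\<And>n. subalgebra M (F n)"
    and filt: "\<And>n. sets (F n) \<subseteq> sets (F (Suc n))"
    and adapted: "\<And>n. X n \<in> borel_measurable (F n)"
    and integ: "\<And>n. integrable M (X n)"
    and A1_const: "\<And>n. \<alpha> n \<ge> 0" "summable \<alpha>"
    and A1: "AE x in M. \<forall>n\<ge>1.
               0 \<le> cexp M F X n x / X (n - 1) x * (if X (n - 1) x \<noteq> 0 then 1 else 0) \<and>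
               cexp M F X n x / X (n - 1) x * (if X (n - 1) x \<noteq> 0 then 1 else 0) \<le> 1 + \<alpha> n"
    and A4: "AE x in M. \<exists>L. (\<lambda>n. Msum M F X 1 n x) \<longlonglongrightarrow> L"
  shows
    "(AE x in M. convergent (\<lambda>n. X n x * (if NT X x < \<infinity> then 1 else 0))) \<and>
     ((\<exists>k :: nat \<Rightarrow> real. (\<forall>n. 0 \<le> k n \<and> k n \<le> 1) \<and> \<not> summable (\<lambda>n. 1 - k n) \<and>
        (AE x in M. \<forall>n\<ge>1.
           0 \<le> cexp M F X n x / X (n - 1) x * (if X (n - 1) x \<noteq> 0 then 1 else 0) \<and>
           cexp M F X n x / X (n - 1) x * (if X (n - 1) x \<noteq> 0 then 1 else 0) \<le> k n))
      \<longrightarrow> (AE x in M. (\<lambda>n. X n x * (if NT X x < \<infinity> then 1 else 0)) \<longlonglongrightarrow> 0)) \<and>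
     (AE x in M. limsup (\<lambda>n. ereal (\<bar>X n x\<bar> * (if NT X x = \<infinity> then 1 else 0)))
                   \<le> limsup (\<lambda>n. ereal \<bar>Uproc M F X n x\<bar>)) \<and>
     ((AE x in M. (\<lambda>n. Uproc M F X n x) \<longlonglongrightarrow> 0)
      \<longrightarrow> (AE x in M. (\<lambda>n. X n x * (if NT X x = \<infinity> then 1 else 0)) \<longlonglongrightarrow> 0))"
proof -
  have path: "AE x in M. A1_path X x (\<lambda>n. cexp M F X n x) (\<lambda>n. Msum M F X 1 n x) \<alpha>"
    using A1 A4 by eventually_elim (rule A1_pathI[OF A1_const])
  have i: "AE x in M. convergent (\<lambda>n. X n x * (if NT X x < \<infinity> then 1 else 0))"
    using path by eventually_elim (rule A1_path.convergent_on_NT_finite)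
  have iii: "AE x in M. limsup (\<lambda>n. ereal (\<bar>X n x\<bar> * (if NT X x = \<infinity> then 1 else 0)))
                          \<le> limsup (\<lambda>n. ereal \<bar>Uproc M F X n x\<bar>)"
    using path by eventually_elim (unfold Uproc_def, rule A1_path.limsup_on_NT_infinite)
  have ii: "AE x in M. (\<lambda>n. X n x * (if NT X x < \<infinity> then 1 else 0)) \<longlonglongrightarrow> 0"
    if "\<forall>n. 0 \<le> k n \<and> k n \<le> 1" "\<not> summable (\<lambda>n. 1 - k n)"
      and "AE x in M. \<forall>n\<ge>1.
             0 \<le> cexp M F X n x / X (n - 1) x * (if X (n - 1) x \<noteq> 0 then 1 else 0) \<and>
             cexp M F X n x / X (n - 1) x * (if X (n - 1) x \<noteq> 0 then 1 else 0) \<le> k n"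
    for k :: "nat \<Rightarrow> real"
    using path that(3)
    by eventually_elim (rule A1_path.tendsto_zero_on_NT_finite[OF _ that(1)[rule_format] that(2)])
  have iv: "AE x in M. (\<lambda>n. X n x * (if NT X x = \<infinity> then 1 else 0)) \<longlonglongrightarrow> 0"
    if "AE x in M. (\<lambda>n. Uproc M F X n x) \<longlonglongrightarrow> 0"
    using iii that by eventually_elim (rule tendsto_zero_if_limsup_abs_le, simp_all add: abs_mult)
  show ?thesis
    by (intro conjI impI i iii; (elim exE conjE)?) (rule ii iv; assumption)+
qed

end
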